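(* Let $S$ be an AG-groupoid with a left identity. The following are equivalent: (i) every bi-ideal $B$ of $S$ is idempotent, i.e. $B^{2}=B$; (ii) $A\cap B=AB$ for all bi-ideals $A,B$ of $S$; (iii) the set $L_S$ of bi-ideals of $S$, with the operation $A\wedge B=AB$, is a semilattice (i.e. $\wedge$ is a well-defined operation on $L_S$ which is commutative, associative and idempotent).
   Context: An AG-groupoid is a set $S$ with a binary operation satisfying $(ab)c=(cb)a$ for all $a,b,c\in S$. A left identity is an element $e$ with $ea=a$ for all $a\in S$. For nonempty subsets, $AB=\{ab:a\in A,b\in B\}$, $B^{2}=BB$. A bi-ideal of $S$ is a nonempty subset $B$ with $BB\subseteq B$ and $(BS)B\subseteq B$. *)

theory Defs
  imports Main
begin

definition AG_groupoid :: "'a set \<Rightarrow> ('a \<Rightarrow> 'a \<Rightarrow> 'a) \<Rightarrow> bool" where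
  "AG_groupoid S m \<longleftrightarrow> (\<forall>a\<in>S. \<forall>b\<in>S. m a b \<in> S) \<and>
     (\<forall>a\<in>S. \<forall>b\<in>S. \<forall>c\<in>S. m (m a b) c = m (m c b) a)"

definition left_identity :: "'a set \<Rightarrow> ('a \<Rightarrow> 'a \<Rightarrow> 'a) \<Rightarrow> 'a \<Rightarrow> bool" where
  "left_identity S m e \<longleftrightarrow> e \<in> S \<and> (\<forall>a\<in>S. m e a = a)"

definition setmult :: "('a \<Rightarrow> 'a \<Rightarrow> 'a) \<Rightarrow> 'a set \<Rightarrow> 'a set \<Rightarrow> 'a set" where
  "setmult m A B = {m a b | a b. a \<in> A \<and> b \<in> B}"

definition bi_ideal :: "'a set \<Rightarrow> ('a \<Rightarrow> 'a \<Rightarrow> 'a) \<Rightarrow> 'a set \<Rightarrow> bool" where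
  "bi_ideal S m B \<longleftrightarrow> B \<subseteq> S \<and> B \<noteq> {} \<and> setmult m B B \<subseteq> B \<and>
     setmult m (setmult m B S) B \<subseteq> B"

definition bi_ideal_semilattice :: "'a set \<Rightarrow> ('a \<Rightarrow> 'a \<Rightarrow> 'a) \<Rightarrow> bool" where
  "bi_ideal_semilattice S m \<longleftrightarrow>
     (let L = {B. bi_ideal S m B} in
       (\<forall>A\<in>L. \<forall>B\<in>L. setmult m A B \<in> L) \<and>
       (\<forall>A\<in>L. \<forall>B\<in>L. setmult m A B = setmult m B A) \<and>
       (\<forall>A\<in>L. \<forall>B\<in>L. \<forall>C\<in>L. setmult m (setmult m A B) C = setmult m A (setmult m B C)) \<and>
       (\<forall>A\<in>L. setmult m A A = A))"

end

theory Submission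
  imports Defs
begin

(* The AG-groupoid identities needed are the medial law (ab)(cd) = (ac)(bd),
   and, with a left identity, a(bc) = b(ac) and the paramedial law
   (ab)(cd) = (db)(ca).  From them: if A is an idempotent bi-ideal then
   AB \<subseteq> A for every B \<subseteq> S, and AB \<subseteq> BA for idempotent A, B.  Hence under
   (i) the product AB lies in A \<inter> B, which is then a bi-ideal and so
   A \<inter> B = (A \<inter> B)(A \<inter> B) \<subseteq> AB; this is (i) \<Rightarrow> (ii).  The step (ii) \<Rightarrow> (iii)
   holds in any groupoid, since the product becomes intersection, and
   (ii) \<Rightarrow> (i), (iii) \<Rightarrow> (i) are immediate. *)

lemma mem_setmult_iff: "x \<in> setmult m A B \<longleftrightarrow> (\<exists>a\<in>A. \<exists>b\<in>B. x = m a b)"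
  unfolding setmult_def by blast

lemma setmult_mono: "A' \<subseteq> A \<Longrightarrow> B' \<subseteq> B \<Longrightarrow> setmult m A' B' \<subseteq> setmult m A B"
  unfolding setmult_def by blast

lemma setmult_nonempty: "A \<noteq> {} \<Longrightarrow> B \<noteq> {} \<Longrightarrow> setmult m A B \<noteq> {}"
  unfolding setmult_def by blast

lemma bi_ideal_Int:
  assumes A: "bi_ideal S m A" and B: "bi_ideal S m B" and ne: "A \<inter> B \<noteq> {}"
  shows "bi_ideal S m (A \<inter> B)"
proof -
  have "setmult m (A \<inter> B) (A \<inter> B) \<subseteq> setmult m A A"
       "setmult m (A \<inter> B) (A \<inter> B) \<subseteq> setmult m B B"
    by (intro setmult_mono; blast)+
  moreover have "setmult m (setmult m (A \<inter> B) S) (A \<inter> B) \<subseteq> setmult m (setmult m A S) A"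
                "setmult m (setmult m (A \<inter> B) S) (A \<inter> B) \<subseteq> setmult m (setmult m B S) B"
    by (intro setmult_mono; blast)+
  ultimately show ?thesis using A B ne unfolding bi_ideal_def by blast
qed

lemma AG_closed: "AG_groupoid S m \<Longrightarrow> a \<in> S \<Longrightarrow> b \<in> S \<Longrightarrow> m a b \<in> S"
  unfolding AG_groupoid_def by blast

lemma AG_left_invertive:
  "AG_groupoid S m \<Longrightarrow> a \<in> S \<Longrightarrow> b \<in> S \<Longrightarrow> c \<in> S \<Longrightarrow> m (m a b) c = m (m c b) a"
  unfolding AG_groupoid_def by blast

lemma AG_medial:
  assumes ag: "AG_groupoid S m" and S: "a \<in> S" "b \<in> S" "c \<in> S" "d \<in> S"
  shows "m (m a b) (m c d) = m (m a c) (m b d)"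
proof -
  have "m (m a b) (m c d) = m (m (m c d) b) a"
    using AG_left_invertive[OF ag] AG_closed[OF ag] S by blast
  also have "m (m c d) b = m (m b d) c"
    using AG_left_invertive[OF ag] S by blast
  also have "m (m (m b d) c) a = m (m a c) (m b d)"
    using AG_left_invertive[OF ag] AG_closed[OF ag] S by metis
  finally show ?thesis .
qed

lemma AG_left_permutable:
  assumes ag: "AG_groupoid S m" and e: "left_identity S m e" and S: "a \<in> S" "b \<in> S" "c \<in> S"
  shows "m a (m b c) = m b (m a c)"
proof -
  have eS: "e \<in> S" and eid: "\<And>x. x \<in> S \<Longrightarrow> m e x = x"
    using e unfolding left_identity_def by auto
  have "m a (m b c) = m (m e a) (m b c)" using eid S by simp
  also have "\<dots> = m (m e b) (m a c)" using AG_medial[OF ag eS S] .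
  also have "\<dots> = m b (m a c)" using eid S by simp
  finally show ?thesis .
qed

lemma AG_paramedial:
  assumes ag: "AG_groupoid S m" and e: "left_identity S m e"
    and S: "a \<in> S" "b \<in> S" "c \<in> S" "d \<in> S"
  shows "m (m a b) (m c d) = m (m d b) (m c a)"
proof -
  have "m (m a b) (m c d) = m c (m (m a b) d)"
    using AG_left_permutable[OF ag e] AG_closed[OF ag] S by blast
  also have "m (m a b) d = m (m d b) a"
    using AG_left_invertive[OF ag] S by blast
  also have "m c (m (m d b) a) = m (m d b) (m c a)"
    using AG_left_permutable[OF ag e] AG_closed[OF ag] S by blast
  finally show ?thesis .
qed

text \<open>An idempotent bi-ideal absorbs products on the right: AB \<subseteq> A for B \<subseteq> S.
  Writing a = a1 (a3 a4), we get ab = ((b a2) a1) = (a3 (b a4)) a1 \<in> (AS)A.\<close>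
lemma idempotent_bi_ideal_absorbs:
  assumes ag: "AG_groupoid S m" and e: "left_identity S m e"
    and A: "bi_ideal S m A" and AA: "setmult m A A = A" and BS: "B \<subseteq> S"
  shows "setmult m A B \<subseteq> A"
proof
  have AS: "A \<subseteq> S" and ASA: "setmult m (setmult m A S) A \<subseteq> A"
    using A unfolding bi_ideal_def by auto
  have split: "\<And>a. a \<in> A \<Longrightarrow> \<exists>a1\<in>A. \<exists>a2\<in>A. a = m a1 a2"
    using AA mem_setmult_iff by metis
  fix x assume "x \<in> setmult m A B"
  then obtain a b where ab: "a \<in> A" "b \<in> B" "x = m a b"
    using mem_setmult_iff by metis
  obtain a1 a2 where a12: "a1 \<in> A" "a2 \<in> A" "a = m a1 a2" using split ab by blast
  obtain a3 a4 where a34: "a3 \<in> A" "a4 \<in> A" "a2 = m a3 a4" using split a12 by blast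
  have S: "a1 \<in> S" "a2 \<in> S" "a3 \<in> S" "a4 \<in> S" "b \<in> S" using AS BS a12 a34 ab by auto
  have "x = m (m b a2) a1" using AG_left_invertive[OF ag] S ab a12 by simp
  also have "m b a2 = m a3 (m b a4)" using AG_left_permutable[OF ag e] S a34 by simp
  finally have "x = m (m a3 (m b a4)) a1" .
  moreover have "m (m a3 (m b a4)) a1 \<in> setmult m (setmult m A S) A"
    using a34 a12 S AG_closed[OF ag] mem_setmult_iff by metis
  ultimately show "x \<in> A" using ASA by auto
qed

lemma idempotent_setmult_commute:
  assumes ag: "AG_groupoid S m" and e: "left_identity S m e"
    and AA: "setmult m A A = A" and BB: "setmult m B B = B" and AS: "A \<subseteq> S" and BS: "B \<subseteq> S"
  shows "setmult m A B \<subseteq> setmult m B A"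
proof
  fix x assume "x \<in> setmult m A B"
  then obtain a b where ab: "a \<in> A" "b \<in> B" "x = m a b" using mem_setmult_iff by metis
  obtain a1 a2 where a12: "a1 \<in> A" "a2 \<in> A" "a = m a1 a2" using AA mem_setmult_iff ab by metis
  obtain b1 b2 where b12: "b1 \<in> B" "b2 \<in> B" "b = m b1 b2" using BB mem_setmult_iff ab by metis
  have S: "a1 \<in> S" "a2 \<in> S" "b1 \<in> S" "b2 \<in> S" using AS BS a12 b12 by auto
  have "x = m (m b2 a2) (m b1 a1)" using AG_paramedial[OF ag e] S ab a12 b12 by simp
  also have "\<dots> = m (m b2 b1) (m a2 a1)" using AG_medial[OF ag] S by simp
  finally have "x = m (m b2 b1) (m a2 a1)" .
  moreover have "m b2 b1 \<in> B" "m a2 a1 \<in> A" using BB AA mem_setmult_iff a12 b12 by metis+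
  ultimately show "x \<in> setmult m B A" using mem_setmult_iff by metis
qed

lemma idempotent_bi_ideals_product_eq_Int:
  assumes ag: "AG_groupoid S m" and e: "left_identity S m e"
    and idem: "\<forall>B. bi_ideal S m B \<longrightarrow> setmult m B B = B"
    and A: "bi_ideal S m A" and B: "bi_ideal S m B"
  shows "A \<inter> B = setmult m A B"
proof
  have AA: "setmult m A A = A" and BB: "setmult m B B = B" using idem A B by auto
  have AS: "A \<subseteq> S" and BS: "B \<subseteq> S" using A B unfolding bi_ideal_def by auto
  have "setmult m A B \<subseteq> A" using idempotent_bi_ideal_absorbs[OF ag e A AA BS] .
  moreover have "setmult m A B \<subseteq> setmult m B A" using idempotent_setmult_commute[OF ag e AA BB AS BS] .
  moreover have "setmult m B A \<subseteq> B" using idempotent_bi_ideal_absorbs[OF ag e B BB AS] .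
  ultimately show sub: "setmult m A B \<subseteq> A \<inter> B" by blast
  have "setmult m A B \<noteq> {}" using A B setmult_nonempty unfolding bi_ideal_def by blast
  then have "bi_ideal S m (A \<inter> B)" using bi_ideal_Int[OF A B] sub by blast
  then have "A \<inter> B = setmult m (A \<inter> B) (A \<inter> B)" using idem by auto
  also have "\<dots> \<subseteq> setmult m A B" by (intro setmult_mono; blast)+
  finally show "A \<inter> B \<subseteq> setmult m A B" .
qed

lemma product_eq_Int_semilattice:
  assumes prod: "\<forall>A B. bi_ideal S m A \<and> bi_ideal S m B \<longrightarrow> A \<inter> B = setmult m A B"
  shows "bi_ideal_semilattice S m"
proof -
  have eq: "setmult m A B = A \<inter> B" if "bi_ideal S m A" "bi_ideal S m B" for A B
    using prod that by auto
  have closed: "bi_ideal S m (A \<inter> B)" if A: "bi_ideal S m A" and B: "bi_ideal S m B" for A B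
  proof -
    have "setmult m A B \<noteq> {}" using A B setmult_nonempty unfolding bi_ideal_def by blast
    then show ?thesis using bi_ideal_Int[OF A B] eq[OF A B] by simp
  qed
  show ?thesis
    unfolding bi_ideal_semilattice_def Let_def
    using eq closed by (simp add: Int_ac)
qed

theorem proposition3:
  fixes S :: "'a set" and m :: "'a \<Rightarrow> 'a \<Rightarrow> 'a"
  assumes "AG_groupoid S m"
    and "\<exists>e. left_identity S m e"
  shows "((\<forall>B. bi_ideal S m B \<longrightarrow> setmult m B B = B)
          \<longleftrightarrow> (\<forall>A B. bi_ideal S m A \<and> bi_ideal S m B \<longrightarrow> A \<inter> B = setmult m A B))
       \<and> ((\<forall>B. bi_ideal S m B \<longrightarrow> setmult m B B = B)
          \<longleftrightarrow> bi_ideal_semilattice S m)"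
proof -
  obtain e where e: "left_identity S m e" using assms(2) by blast
  let ?i = "\<forall>B. bi_ideal S m B \<longrightarrow> setmult m B B = B"
  let ?ii = "\<forall>A B. bi_ideal S m A \<and> bi_ideal S m B \<longrightarrow> A \<inter> B = setmult m A B"
  have i_ii: "?i \<Longrightarrow> ?ii"
    using idempotent_bi_ideals_product_eq_Int[OF assms(1) e] by blast
  show ?thesis
  proof (intro conjI iffI)
    show "?i \<Longrightarrow> ?ii" by (fact i_ii)
    show "?ii \<Longrightarrow> ?i" by auto
    show "?i \<Longrightarrow> bi_ideal_semilattice S m" by (rule product_eq_Int_semilattice[OF i_ii])
    show "bi_ideal_semilattice S m \<Longrightarrow> ?i"
      unfolding bi_ideal_semilattice_def Let_def by simp
  qed
qed

end
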